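(* If an E-space $X$ has a $\sigma$-point-finite base, then $X$ has a $\sigma$-point-finite base consisting of cozero-sets.
   Context: "Space" means topological $T_0$-space. A zero-set (cozero-set) of $X$ is $f^{-1}(0)$ (resp. its complement) for continuous $f:X\to[0,1]$. A U-representation of $V\subseteq X$ is a sequence $(U_n(V))_{n\in\mathbb{N}}$ with $V=\bigcup_n U_n(V)$, $U_n(V)\subseteq U_{n+1}(V)$, $U_{2n-1}(V)$ a zero-set, $U_{2n}(V)$ a cozero-set. A family $\alpha$ is an almost subbase of $X$ if U-representations of its members can be chosen so that $\alpha\cup\{X\setminus U_{2n-1}(V):V\in\alpha,n\in\mathbb{N}\}$ is a subbase of $X$. A family is strongly point-finite if every countably infinite subfamily contains a finite subfamily with empty intersection; $\sigma$-strongly point-finite ($\sigma$-point-finite) means a countable union of strongly point-finite (point-finite) families. An E-space is a space with a $\sigma$-strongly point-finite almost subbase. *)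

theory Defs
  imports "HOL-Analysis.Analysis"
begin

definition zero_set :: "'a topology \<Rightarrow> 'a set \<Rightarrow> bool" where
  "zero_set X Z \<longleftrightarrow>
     (\<exists>f. continuous_map X (top_of_set {0..1::real}) f \<and> Z = {x \<in> topspace X. f x = 0})"

definition cozero_set :: "'a topology \<Rightarrow> 'a set \<Rightarrow> bool" where
  "cozero_set X C \<longleftrightarrow>
     (\<exists>f. continuous_map X (top_of_set {0..1::real}) f \<and> C = topspace X - {x \<in> topspace X. f x = 0})"

text \<open>U-representation \<open>(U n)\<close>, indices \<open>n \<ge> 1\<close> as in the paper (the value at 0 is irrelevant).\<close>
definition U_representation :: "'a topology \<Rightarrow> 'a set \<Rightarrow> (nat \<Rightarrow> 'a set) \<Rightarrow> bool" where
  "U_representation X V U \<longleftrightarrow>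
     V = (\<Union>n\<in>{1..}. U n) \<and>
     (\<forall>n\<ge>1. U n \<subseteq> U (Suc n)) \<and>
     (\<forall>n\<ge>1. zero_set X (U (2*n - 1)) \<and> cozero_set X (U (2*n)))"

text \<open>Subbase: finite intersections (the empty one being the whole space) form a base.\<close>
definition subbase_of :: "'a topology \<Rightarrow> 'a set set \<Rightarrow> bool" where
  "subbase_of X S \<longleftrightarrow>
     (\<forall>U\<in>S. U \<subseteq> topspace X) \<and>
     X = topology (arbitrary union_of (finite intersection_of (\<lambda>U. U \<in> S) relative_to topspace X))"

definition base_of :: "'a topology \<Rightarrow> 'a set set \<Rightarrow> bool" where
  "base_of X B \<longleftrightarrow>
     (\<forall>U\<in>B. openin X U) \<and> (\<forall>W. openin X W \<longrightarrow> (\<exists>C. C \<subseteq> B \<and> \<Union>C = W))"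

definition almost_subbase :: "'a topology \<Rightarrow> 'a set set \<Rightarrow> bool" where
  "almost_subbase X \<alpha> \<longleftrightarrow>
     (\<exists>U :: 'a set \<Rightarrow> nat \<Rightarrow> 'a set.
        (\<forall>V\<in>\<alpha>. U_representation X V (U V)) \<and>
        subbase_of X (\<alpha> \<union> {topspace X - U V (2*n - 1) | V n. V \<in> \<alpha> \<and> n \<ge> 1}))"

definition point_finite :: "'a topology \<Rightarrow> 'a set set \<Rightarrow> bool" where
  "point_finite X F \<longleftrightarrow> (\<forall>x\<in>topspace X. finite {U \<in> F. x \<in> U})"

definition strongly_point_finite :: "'a set set \<Rightarrow> bool" where
  "strongly_point_finite F \<longleftrightarrow>
     (\<forall>G. G \<subseteq> F \<and> countable G \<and> infinite G \<longrightarrow> (\<exists>H. H \<subseteq> G \<and> finite H \<and> \<Inter>H = {}))"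

definition sigma_point_finite :: "'a topology \<Rightarrow> 'a set set \<Rightarrow> bool" where
  "sigma_point_finite X F \<longleftrightarrow>
     (\<exists>Fs :: nat \<Rightarrow> 'a set set. F = (\<Union>n. Fs n) \<and> (\<forall>n. point_finite X (Fs n)))"

definition sigma_strongly_point_finite :: "'a set set \<Rightarrow> bool" where
  "sigma_strongly_point_finite F \<longleftrightarrow>
     (\<exists>Fs :: nat \<Rightarrow> 'a set set. F = (\<Union>n. Fs n) \<and> (\<forall>n. strongly_point_finite (Fs n)))"

definition E_space :: "'a topology \<Rightarrow> bool" where
  "E_space X \<longleftrightarrow> t0_space X \<and>
     (\<exists>\<alpha>. almost_subbase X \<alpha> \<and> sigma_strongly_point_finite \<alpha>)"

end

(*
  Write the almost subbase as a union of point-finite families Fs k and the base as a union of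
  point-finite families Bs m.  A point x of an open set W lies in a finite intersection of
  subbasic sets inside W; near x, each member V of the almost subbase may be replaced by a
  cozero-set U V (2m) containing x, and each subbasic complement X - U V (2n - 1) is accounted
  for by excluding the zero-set U V (2n - 1).  For a finite set a of indices of level at most N,
  let core a be the corresponding finite intersection of cozero-sets, and remove from it the
  intersection, over all "certificates" g (at most N indices of level at most N with
  core a - \<Union>g \<subseteq> W), of \<Union>g.  This intersection is a zero-set: by point-finiteness the indices
  whose zero-sets contain a point form a finite transversal of the certificates, and a family
  of sets of bounded size has finitely many finite transversals from which all others are
  obtained by enlargement.  The resulting cozero-sets lie in W, form a point-finite family for
  fixed m and N, and together form a base.
*)

theory Submission
  imports Defs
begin

lemma continuous_map_unit_interval_iff:
  "continuous_map X (top_of_set {0..1::real}) f \<longleftrightarrow>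
   continuous_map X euclideanreal f \<and> (\<forall>x\<in>topspace X. 0 \<le> f x \<and> f x \<le> 1)"
  by (auto simp: continuous_map_in_subtopology Pi_iff)

lemma zero_set_subset: "zero_set X Z \<Longrightarrow> Z \<subseteq> topspace X"
  unfolding zero_set_def by auto

lemma cozero_set_iff_zero_set:
  "cozero_set X C \<longleftrightarrow> C \<subseteq> topspace X \<and> zero_set X (topspace X - C)"
proof
  assume "cozero_set X C"
  then obtain f where f: "continuous_map X (top_of_set {0..1::real}) f"
      and C: "C = topspace X - {x \<in> topspace X. f x = 0}"
    unfolding cozero_set_def by auto
  have "topspace X - C = {x \<in> topspace X. f x = 0}" using C by auto
  then show "C \<subseteq> topspace X \<and> zero_set X (topspace X - C)"
    using f C unfolding zero_set_def by auto
next
  assume C: "C \<subseteq> topspace X \<and> zero_set X (topspace X - C)"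
  then obtain f where f: "continuous_map X (top_of_set {0..1::real}) f"
      and Z: "topspace X - C = {x \<in> topspace X. f x = 0}"
    unfolding zero_set_def by auto
  have "C = topspace X - {x \<in> topspace X. f x = 0}" using Z C by auto
  then show "cozero_set X C" using f unfolding cozero_set_def by auto
qed

lemma zero_set_empty: "zero_set X {}"
  unfolding zero_set_def
  by (rule exI[of _ "\<lambda>x. 1"]) (auto simp: continuous_map_unit_interval_iff)

lemma zero_set_topspace: "zero_set X (topspace X)"
  unfolding zero_set_def
  by (rule exI[of _ "\<lambda>x. 0"]) (auto simp: continuous_map_unit_interval_iff)

lemma zero_set_Un:
  assumes "zero_set X A" "zero_set X B" shows "zero_set X (A \<union> B)"
proof -
  obtain f where f: "continuous_map X (top_of_set {0..1::real}) f"
      and A: "A = {x \<in> topspace X. f x = 0}" using assms(1) unfolding zero_set_def by auto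
  obtain g where g: "continuous_map X (top_of_set {0..1::real}) g"
      and B: "B = {x \<in> topspace X. g x = 0}" using assms(2) unfolding zero_set_def by auto
  have "continuous_map X (top_of_set {0..1::real}) (\<lambda>x. f x * g x)"
    using f g by (auto simp: continuous_map_unit_interval_iff
        intro!: continuous_map_real_mult mult_le_one)
  moreover have "A \<union> B = {x \<in> topspace X. f x * g x = 0}" using A B by auto
  ultimately show ?thesis unfolding zero_set_def by blast
qed

lemma zero_set_Int:
  assumes "zero_set X A" "zero_set X B" shows "zero_set X (A \<inter> B)"
proof -
  obtain f where f: "continuous_map X (top_of_set {0..1::real}) f"
      and A: "A = {x \<in> topspace X. f x = 0}" using assms(1) unfolding zero_set_def by auto
  obtain g where g: "continuous_map X (top_of_set {0..1::real}) g"
      and B: "B = {x \<in> topspace X. g x = 0}" using assms(2) unfolding zero_set_def by auto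
  have "continuous_map X (top_of_set {0..1::real}) (\<lambda>x. max (f x) (g x))"
    using f g by (auto simp: continuous_map_unit_interval_iff intro!: continuous_map_real_max)
  moreover have "A \<inter> B = {x \<in> topspace X. max (f x) (g x) = 0}"
    using A B f g by (auto simp: continuous_map_unit_interval_iff max_def)
  ultimately show ?thesis unfolding zero_set_def by blast
qed

lemma zero_set_finite_UN:
  assumes "finite Q" "\<And>q. q \<in> Q \<Longrightarrow> zero_set X (Z q)"
  shows "zero_set X (\<Union>q\<in>Q. Z q)"
  using assms by (induction Q rule: finite_induct) (auto intro: zero_set_Un zero_set_empty)

lemma zero_set_finite_INT:
  assumes "finite Q" "\<And>q. q \<in> Q \<Longrightarrow> zero_set X (Z q)"
  shows "zero_set X (topspace X \<inter> (\<Inter>q\<in>Q. Z q))"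
  using assms
proof (induction Q rule: finite_induct)
  case empty then show ?case by (simp add: zero_set_topspace)
next
  case (insert q Q)
  have "topspace X \<inter> (\<Inter>q\<in>insert q Q. Z q) = Z q \<inter> (topspace X \<inter> (\<Inter>q\<in>Q. Z q))"
    using zero_set_subset[OF insert.prems[of q]] by auto
  then show ?case using insert by (auto intro: zero_set_Int)
qed

lemma cozero_set_Int:
  assumes "cozero_set X A" "cozero_set X B" shows "cozero_set X (A \<inter> B)"
proof -
  have "topspace X - (A \<inter> B) = (topspace X - A) \<union> (topspace X - B)" by auto
  then show ?thesis using assms by (auto simp: cozero_set_iff_zero_set intro: zero_set_Un)
qed

lemma cozero_set_finite_INT:
  assumes "finite Q" "\<And>q. q \<in> Q \<Longrightarrow> cozero_set X (C q)"
  shows "cozero_set X (topspace X \<inter> (\<Inter>q\<in>Q. C q))"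
  using assms
proof (induction Q rule: finite_induct)
  case empty then show ?case by (simp add: cozero_set_iff_zero_set zero_set_empty)
next
  case (insert q Q)
  have "topspace X \<inter> (\<Inter>q\<in>insert q Q. C q) = C q \<inter> (topspace X \<inter> (\<Inter>q\<in>Q. C q))"
    using insert.prems[of q] by (auto simp: cozero_set_iff_zero_set)
  then show ?case using insert by (auto intro: cozero_set_Int)
qed

lemma cozero_set_imp_openin: "cozero_set X C \<Longrightarrow> openin X C"
proof -
  assume "cozero_set X C"
  then obtain f where f: "continuous_map X (top_of_set {0..1::real}) f"
      and C: "C = topspace X - {x \<in> topspace X. f x = 0}"
    unfolding cozero_set_def by auto
  have "continuous_map X euclideanreal f" using f by (simp add: continuous_map_unit_interval_iff)
  then have "openin X {x \<in> topspace X. f x \<in> - {0}}"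
    using openin_continuous_map_preimage[of X euclideanreal f "-{0}"] by auto
  moreover have "C = {x \<in> topspace X. f x \<in> - {0}}" using C by auto
  ultimately show ?thesis by simp
qed

definition finite_transversal :: "'i set set \<Rightarrow> 'i set \<Rightarrow> bool" where
  "finite_transversal G P \<longleftrightarrow> finite P \<and> (\<forall>g\<in>G. g \<inter> P \<noteq> {})"

text \<open>Induction step on the size of the members of \<open>G\<close>: after fixing a finite transversal
  \<open>P\<^sub>0\<close>, a finite transversal \<open>P\<close> of \<open>G\<close> is, up to its trace \<open>R = P \<inter> P\<^sub>0\<close>, a transversal of
  the residue family, whose members are strictly smaller since they miss \<open>P\<^sub>0\<close>.\<close>

definition transversal_residue :: "'i set set \<Rightarrow> 'i set \<Rightarrow> 'i set \<Rightarrow> 'i set set" where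
  "transversal_residue G P\<^sub>0 R = (\<lambda>g. g - P\<^sub>0) ` {g \<in> G. g \<inter> R = {}}"

lemma finite_transversal_residue_Un:
  assumes "finite R" "finite_transversal (transversal_residue G P\<^sub>0 R) Q"
  shows "finite_transversal G (R \<union> Q)"
  using assms unfolding finite_transversal_def transversal_residue_def by auto

lemma finite_transversal_residue:
  assumes "finite_transversal G P"
  shows "finite_transversal (transversal_residue G P\<^sub>0 (P \<inter> P\<^sub>0)) P"
  using assms unfolding finite_transversal_def transversal_residue_def by auto

lemma card_transversal_residue_le:
  assumes "finite_transversal G P\<^sub>0" "\<forall>g\<in>G. finite g \<and> card g \<le> Suc s"
  shows "\<forall>h\<in>transversal_residue G P\<^sub>0 R. finite h \<and> card h \<le> s"
proof
  fix h assume "h \<in> transversal_residue G P\<^sub>0 R"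
  then obtain g where g: "g \<in> G" "h = g - P\<^sub>0" unfolding transversal_residue_def by auto
  then have "g - P\<^sub>0 \<subset> g" using assms(1) unfolding finite_transversal_def by auto
  then have "card (g - P\<^sub>0) < card g" using assms(2) g(1) by (simp add: psubset_card_mono)
  then show "finite h \<and> card h \<le> s" using assms(2) g by auto
qed

lemma finite_transversals_finitely_generated:
  assumes "\<forall>g\<in>G. finite g \<and> card g \<le> s"
  shows "\<exists>QQ. finite QQ \<and> (\<forall>Q\<in>QQ. finite_transversal G Q) \<and>
     (\<forall>P. finite_transversal G P \<longrightarrow> (\<exists>Q\<in>QQ. Q \<subseteq> P))"
  using assms
proof (induction s arbitrary: G)
  case 0
  then have "G = {} \<or> {} \<in> G" by auto
  then show ?case
    by (elim disjE; intro exI[of _ "{{}}"] exI[of _ "{}"]) (auto simp: finite_transversal_def)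
next
  case (Suc s)
  show ?case
  proof (cases "\<exists>P\<^sub>0. finite_transversal G P\<^sub>0")
    case False
    then show ?thesis by (intro exI[of _ "{}"]) auto
  next
    case True
    then obtain P\<^sub>0 where P\<^sub>0: "finite_transversal G P\<^sub>0" by blast
    have "\<forall>R. \<exists>QQ. finite QQ \<and> (\<forall>Q\<in>QQ. finite_transversal (transversal_residue G P\<^sub>0 R) Q) \<and>
        (\<forall>P. finite_transversal (transversal_residue G P\<^sub>0 R) P \<longrightarrow> (\<exists>Q\<in>QQ. Q \<subseteq> P))"
      using Suc.IH card_transversal_residue_le[OF P\<^sub>0 Suc.prems] by simp
    then obtain QQ where QQ: "\<And>R. finite (QQ R)"
        "\<And>R Q. Q \<in> QQ R \<Longrightarrow> finite_transversal (transversal_residue G P\<^sub>0 R) Q"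
        "\<And>R P. finite_transversal (transversal_residue G P\<^sub>0 R) P \<Longrightarrow> \<exists>Q\<in>QQ R. Q \<subseteq> P"
      by (metis (no_types, lifting) choice)
    have fin_P\<^sub>0: "finite P\<^sub>0" using P\<^sub>0 by (simp add: finite_transversal_def)
    show ?thesis
    proof (intro exI[of _ "\<Union>R\<in>Pow P\<^sub>0. (\<union>) R ` QQ R"] conjI allI ballI impI)
      show "finite (\<Union>R\<in>Pow P\<^sub>0. (\<union>) R ` QQ R)" using fin_P\<^sub>0 QQ(1) by simp
    next
      fix Q assume "Q \<in> (\<Union>R\<in>Pow P\<^sub>0. (\<union>) R ` QQ R)"
      then obtain R Q' where R: "R \<subseteq> P\<^sub>0" "Q' \<in> QQ R" "Q = R \<union> Q'" by auto
      have "finite R" using R(1) fin_P\<^sub>0 by (rule finite_subset)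
      with QQ(2)[OF R(2)] show "finite_transversal G Q"
        unfolding R(3) by (rule finite_transversal_residue_Un[rotated])
    next
      fix P assume "finite_transversal G P"
      then obtain Q where Q: "Q \<in> QQ (P \<inter> P\<^sub>0)" "Q \<subseteq> P"
        using QQ(3) finite_transversal_residue by blast
      then have "P \<inter> P\<^sub>0 \<union> Q \<in> (\<Union>R\<in>Pow P\<^sub>0. (\<union>) R ` QQ R)" by blast
      with Q(2) show "\<exists>Q\<in>\<Union>R\<in>Pow P\<^sub>0. (\<union>) R ` QQ R. Q \<subseteq> P" by blast
    qed
  qed
qed

lemma zero_set_INT_UN_point_finite:
  assumes zero: "\<And>i. i \<in> I \<Longrightarrow> zero_set X (Z i)"
    and point_finite: "\<And>x. x \<in> topspace X \<Longrightarrow> finite {i \<in> I. x \<in> Z i}"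
    and G: "\<forall>g\<in>G. g \<subseteq> I \<and> finite g \<and> card g \<le> s"
  shows "zero_set X (topspace X \<inter> (\<Inter>g\<in>G. \<Union>i\<in>g. Z i))"
proof -
  obtain QQ where QQ: "finite QQ" "\<And>Q. Q \<in> QQ \<Longrightarrow> finite_transversal G Q"
      "\<And>P. finite_transversal G P \<Longrightarrow> \<exists>Q\<in>QQ. Q \<subseteq> P"
    using finite_transversals_finitely_generated[of G s] G by metis
  have eq: "topspace X \<inter> (\<Inter>g\<in>G. \<Union>i\<in>g. Z i) = (\<Union>Q\<in>QQ. topspace X \<inter> (\<Inter>i\<in>Q \<inter> I. Z i))"
  proof (intro equalityI subsetI)
    fix x assume x: "x \<in> topspace X \<inter> (\<Inter>g\<in>G. \<Union>i\<in>g. Z i)"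
    then have "finite_transversal G {i \<in> I. x \<in> Z i}"
      using point_finite G unfolding finite_transversal_def by blast
    then obtain Q where "Q \<in> QQ" "Q \<subseteq> {i \<in> I. x \<in> Z i}" using QQ(3) by blast
    with x show "x \<in> (\<Union>Q\<in>QQ. topspace X \<inter> (\<Inter>i\<in>Q \<inter> I. Z i))" by blast
  next
    fix x assume "x \<in> (\<Union>Q\<in>QQ. topspace X \<inter> (\<Inter>i\<in>Q \<inter> I. Z i))"
    then obtain Q where "Q \<in> QQ" "x \<in> topspace X" "\<forall>i\<in>Q \<inter> I. x \<in> Z i" by blast
    with QQ(2) G show "x \<in> topspace X \<inter> (\<Inter>g\<in>G. \<Union>i\<in>g. Z i)"
      unfolding finite_transversal_def by blast
  qed
  have "zero_set X (topspace X \<inter> (\<Inter>i\<in>Q \<inter> I. Z i))" if "Q \<in> QQ" for Q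
    using QQ(2)[OF that] zero by (intro zero_set_finite_INT) (auto simp: finite_transversal_def)
  then show ?thesis unfolding eq using QQ(1) by (rule zero_set_finite_UN[rotated])
qed

lemma strongly_point_finite_imp_point_finite:
  assumes "strongly_point_finite F" shows "point_finite X F"
  unfolding point_finite_def
proof (rule ballI, rule ccontr)
  fix x assume "infinite {V \<in> F. x \<in> V}"
  then obtain C where C: "C \<subseteq> {V \<in> F. x \<in> V}" "countable C" "infinite C"
    using infinite_countable_subset'[of "{V \<in> F. x \<in> V}"] by auto
  have "\<forall>G. G \<subseteq> F \<and> countable G \<and> infinite G \<longrightarrow> (\<exists>H. H \<subseteq> G \<and> finite H \<and> \<Inter>H = {})"
    using assms unfolding strongly_point_finite_def .
  then have "\<exists>H. H \<subseteq> C \<and> finite H \<and> \<Inter>H = {}" using C by auto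
  then obtain H where H: "H \<subseteq> C" "\<Inter>H = {}" by blast
  have "x \<in> \<Inter>H" using H(1) C(1) by auto
  with H(2) show False by simp
qed

lemma U_representation_mono:
  assumes "U_representation X V U" "1 \<le> n" "n \<le> p"
  shows "U n \<subseteq> U p"
  using assms(3)
proof (induction p rule: dec_induct)
  case (step p)
  then have "U p \<subseteq> U (Suc p)" using assms(1,2) unfolding U_representation_def by simp
  with step.IH show ?case by blast
qed simp

lemma U_representation_subset:
  "U_representation X V U \<Longrightarrow> 1 \<le> n \<Longrightarrow> U n \<subseteq> V"
  unfolding U_representation_def by auto

lemma U_representation_cozero_cover:
  assumes "U_representation X V U" "x \<in> V"
  obtains m where "1 \<le> m" "x \<in> U (2*m)"
proof -
  obtain n where n: "1 \<le> n" "x \<in> U n"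
    using assms unfolding U_representation_def by auto
  have "U n \<subseteq> U (2*n)" using U_representation_mono[OF assms(1) n(1)] by simp
  with n that show ?thesis by blast
qed

lemma subbase_of_neighbourhood:
  assumes "subbase_of X S" "openin X W" "x \<in> W"
  obtains F where "finite F" "F \<subseteq> S" "x \<in> \<Inter>F" "topspace X \<inter> \<Inter>F \<subseteq> W"
proof -
  have "openin X W \<longleftrightarrow>
      (arbitrary union_of (finite intersection_of (\<lambda>U. U \<in> S) relative_to topspace X)) W"
    using assms(1) unfolding subbase_of_def by (metis openin_subbase)
  then obtain \<U> where \<U>: "\<U> \<subseteq> Collect (finite intersection_of (\<lambda>U. U \<in> S) relative_to topspace X)"
      "\<Union>\<U> = W"
    using assms(2) unfolding union_of_def by auto
  then obtain u where u: "u \<in> \<U>" "x \<in> u" using assms(3) by blast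
  then have "(finite intersection_of (\<lambda>U. U \<in> S) relative_to topspace X) u" using \<U>(1) by blast
  then obtain v where v: "(finite intersection_of (\<lambda>U. U \<in> S)) v" "topspace X \<inter> v = u"
    unfolding relative_to_def by blast
  then obtain F where F: "finite F" "F \<subseteq> S" "\<Inter>F = v"
    unfolding intersection_of_def by auto
  show ?thesis
  proof
    show "x \<in> \<Inter>F" "topspace X \<inter> \<Inter>F \<subseteq> W" using u v F(3) \<U>(2) by auto
  qed (use F in auto)
qed

lemma base_ofI:
  assumes "\<forall>U\<in>B. openin X U"
    and "\<And>W x. openin X W \<Longrightarrow> x \<in> W \<Longrightarrow> \<exists>U\<in>B. x \<in> U \<and> U \<subseteq> W"
  shows "base_of X B"
proof -
  have "\<exists>C. C \<subseteq> B \<and> \<Union>C = W" if "openin X W" for W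
    using assms(2)[OF that] by (intro exI[of _ "{U \<in> B. U \<subseteq> W}"]) blast
  with assms(1) show ?thesis unfolding base_of_def by blast
qed

lemma sigma_strongly_point_finite_imp_sigma_point_finite:
  "sigma_strongly_point_finite F \<Longrightarrow> sigma_point_finite X F"
  unfolding sigma_strongly_point_finite_def sigma_point_finite_def
  using strongly_point_finite_imp_point_finite by metis

locale sigma_point_finite_almost_subbase =
  fixes X :: "'a topology" and U :: "'a set \<Rightarrow> nat \<Rightarrow> 'a set"
    and Fs :: "nat \<Rightarrow> 'a set set" and Bs :: "nat \<Rightarrow> 'a set set"
  assumes U_representation: "\<And>V k. V \<in> Fs k \<Longrightarrow> U_representation X V (U V)"
    and subbase: "subbase_of X ((\<Union>k. Fs k) \<union>
        {topspace X - U V (2*n - 1) | V n. V \<in> (\<Union>k. Fs k) \<and> n \<ge> 1})"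
    and point_finite_Fs: "\<And>k. point_finite X (Fs k)"
    and base: "base_of X (\<Union>m. Bs m)"
    and point_finite_Bs: "\<And>m. point_finite X (Bs m)"
begin

definition subbasic :: "'a set set" where
  "subbasic = (\<Union>k. Fs k) \<union> {topspace X - U V (2*n - 1) | V n. V \<in> (\<Union>k. Fs k) \<and> n \<ge> 1}"

lemma subbase_of_subbasic: "subbase_of X subbasic"
  unfolding subbasic_def by (rule subbase)

text \<open>An index \<open>(n, V)\<close> stands for the zero-set \<open>U V (2n - 1)\<close> and the cozero-set
  \<open>U V (2n)\<close> of the U-representation of \<open>V\<close>; \<open>idx N\<close> collects the indices with \<open>n \<le> N\<close> and
  \<open>V \<in> Fs k\<close> for some \<open>k \<le> N\<close>, so that only finitely many \<open>(n, V) \<in> idx N\<close> have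
  \<open>x \<in> V\<close>.\<close>

definition idx :: "nat \<Rightarrow> (nat \<times> 'a set) set" where
  "idx N = {(n, V). 1 \<le> n \<and> n \<le> N \<and> (\<exists>k\<le>N. V \<in> Fs k)}"

definition zpart :: "nat \<times> 'a set \<Rightarrow> 'a set" where
  "zpart i = U (snd i) (2 * fst i - 1)"

definition cpart :: "nat \<times> 'a set \<Rightarrow> 'a set" where
  "cpart i = U (snd i) (2 * fst i)"

lemma idx_mono: "N \<le> N' \<Longrightarrow> idx N \<subseteq> idx N'"
  unfolding idx_def by (auto intro: le_trans)

lemma mem_UN_idx_iff: "(n, V) \<in> (\<Union>N. idx N) \<longleftrightarrow> 1 \<le> n \<and> V \<in> (\<Union>k. Fs k)"
proof
  assume "1 \<le> n \<and> V \<in> (\<Union>k. Fs k)"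
  then obtain k where "1 \<le> n" "V \<in> Fs k" by blast
  then have "(n, V) \<in> idx (max n k)" unfolding idx_def by (auto intro!: exI[of _ k])
  then show "(n, V) \<in> (\<Union>N. idx N)" by blast
qed (auto simp: idx_def)

lemma finite_subset_idx:
  assumes "finite a" "a \<subseteq> (\<Union>N. idx N)"
  obtains N where "a \<subseteq> idx N"
proof -
  have "\<exists>N. a \<subseteq> idx N"
    using assms
  proof (induction a rule: finite_induct)
    case (insert i a)
    then obtain N N' where "a \<subseteq> idx N" "i \<in> idx N'" by blast
    then have "insert i a \<subseteq> idx (max N N')"
      using idx_mono[of N "max N N'"] idx_mono[of N' "max N N'"] by auto
    then show ?case by blast
  qed simp
  with that show ?thesis by blast
qed

lemma idx_U_representation:
  "i \<in> idx N \<Longrightarrow> 1 \<le> fst i \<and> U_representation X (snd i) (U (snd i))"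
  unfolding idx_def by (auto intro: U_representation)

lemma zero_set_zpart: "i \<in> idx N \<Longrightarrow> zero_set X (zpart i)"
  using idx_U_representation unfolding zpart_def U_representation_def by blast

lemma cozero_set_cpart: "i \<in> idx N \<Longrightarrow> cozero_set X (cpart i)"
  using idx_U_representation unfolding cpart_def U_representation_def by blast

lemma zpart_subset: "i \<in> idx N \<Longrightarrow> zpart i \<subseteq> snd i"
  using idx_U_representation[of i N] U_representation_subset[of X "snd i" "U (snd i)"]
  unfolding zpart_def by (simp add: Suc_leI)

lemma cpart_subset: "i \<in> idx N \<Longrightarrow> cpart i \<subseteq> snd i"
  using idx_U_representation[of i N] U_representation_subset[of X "snd i" "U (snd i)"]
  unfolding cpart_def by simp

lemma finite_idx_containing:
  assumes "x \<in> topspace X" shows "finite {i \<in> idx N. x \<in> snd i}"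
proof (rule finite_subset)
  show "{i \<in> idx N. x \<in> snd i} \<subseteq> {..N} \<times> (\<Union>k\<le>N. {V \<in> Fs k. x \<in> V})"
    unfolding idx_def by auto
  show "finite ({..N} \<times> (\<Union>k\<le>N. {V \<in> Fs k. x \<in> V}))"
    using point_finite_Fs assms unfolding point_finite_def by auto
qed

definition core :: "(nat \<times> 'a set) set \<Rightarrow> 'a set" where
  "core a = topspace X \<inter> (\<Inter>i\<in>a. cpart i)"

definition guards :: "'a set \<Rightarrow> nat \<Rightarrow> (nat \<times> 'a set) set \<Rightarrow> (nat \<times> 'a set) set set" where
  "guards W N a = {g. g \<subseteq> idx N \<and> finite g \<and> card g \<le> N \<and> core a - (\<Union>i\<in>g. zpart i) \<subseteq> W}"

definition excluded :: "'a set \<Rightarrow> nat \<Rightarrow> (nat \<times> 'a set) set \<Rightarrow> 'a set" where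
  "excluded W N a = topspace X \<inter> (\<Inter>g\<in>guards W N a. \<Union>i\<in>g. zpart i)"

definition piece :: "'a set \<Rightarrow> nat \<Rightarrow> (nat \<times> 'a set) set \<Rightarrow> 'a set" where
  "piece W N a = core a - excluded W N a"

definition layer :: "nat \<Rightarrow> nat \<Rightarrow> 'a set set" where
  "layer m N = {piece W N a | W a. W \<in> Bs m \<and> finite a \<and> a \<subseteq> idx N}"

lemma piece_subset: "piece W N a \<subseteq> W"
proof
  fix x assume x: "x \<in> piece W N a"
  then have "x \<in> core a" "x \<in> topspace X" unfolding piece_def core_def by auto
  moreover obtain g where "g \<in> guards W N a" "x \<notin> (\<Union>i\<in>g. zpart i)"
    using x \<open>x \<in> topspace X\<close> unfolding piece_def excluded_def by auto
  ultimately show "x \<in> W" unfolding guards_def by blast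
qed

lemma cozero_set_piece:
  assumes "finite a" "a \<subseteq> idx N"
  shows "cozero_set X (piece W N a)"
proof -
  have "cozero_set X (core a)"
    unfolding core_def using assms cozero_set_cpart by (intro cozero_set_finite_INT) auto
  moreover have "zero_set X (excluded W N a)"
    unfolding excluded_def
  proof (rule zero_set_INT_UN_point_finite)
    show "finite {i \<in> idx N. x \<in> zpart i}" if "x \<in> topspace X" for x
      using zpart_subset by (blast intro: finite_subset[OF _ finite_idx_containing[OF that, of N]])
    show "\<forall>g\<in>guards W N a. g \<subseteq> idx N \<and> finite g \<and> card g \<le> N"
      unfolding guards_def by blast
  qed (rule zero_set_zpart)
  then have "cozero_set X (topspace X - excluded W N a)"
    by (simp add: cozero_set_iff_zero_set double_diff excluded_def)
  moreover have "piece W N a = core a \<inter> (topspace X - excluded W N a)"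
    unfolding piece_def core_def by blast
  ultimately show ?thesis by (simp add: cozero_set_Int)
qed

lemma point_finite_layer: "point_finite X (layer m N)"
  unfolding point_finite_def
proof
  fix x assume x: "x \<in> topspace X"
  have "{c \<in> layer m N. x \<in> c} \<subseteq>
      (\<lambda>(W, a). piece W N a) ` ({W \<in> Bs m. x \<in> W} \<times> Pow {i \<in> idx N. x \<in> snd i})"
  proof
    fix c assume "c \<in> {c \<in> layer m N. x \<in> c}"
    then obtain W a where c: "c = piece W N a" "W \<in> Bs m" "a \<subseteq> idx N" "x \<in> c"
      unfolding layer_def by blast
    then have "x \<in> W" using piece_subset by blast
    moreover have "x \<in> snd i" if "i \<in> a" for i
      using c that cpart_subset unfolding piece_def core_def by blast
    ultimately show "c \<in> (\<lambda>(W, a). piece W N a) ` ({W \<in> Bs m. x \<in> W} \<times> Pow {i \<in> idx N. x \<in> snd i})"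
      using c by auto
  qed
  moreover have "finite {W \<in> Bs m. x \<in> W}"
    using point_finite_Bs x unfolding point_finite_def by blast
  ultimately show "finite {c \<in> layer m N. x \<in> c}"
    using finite_idx_containing[OF x] by (auto elim: finite_subset)
qed

lemma subbasic_INT_approx:
  assumes "finite F" "F \<subseteq> subbasic" "x \<in> topspace X" "x \<in> \<Inter>F"
  shows "\<exists>a g. finite a \<and> a \<subseteq> (\<Union>N. idx N) \<and> finite g \<and> g \<subseteq> (\<Union>N. idx N) \<and>
    x \<in> core a \<and> x \<notin> (\<Union>i\<in>g. zpart i) \<and> core a - (\<Union>i\<in>g. zpart i) \<subseteq> \<Inter>F"
  using assms
proof (induction F rule: finite_induct)
  case empty
  then show ?case by (intro exI[of _ "{}"]) (simp add: core_def)
next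
  case (insert f F)
  then obtain a g where IH: "finite a" "a \<subseteq> (\<Union>N. idx N)" "finite g" "g \<subseteq> (\<Union>N. idx N)"
      "x \<in> core a" "x \<notin> (\<Union>i\<in>g. zpart i)" "core a - (\<Union>i\<in>g. zpart i) \<subseteq> \<Inter>F"
    by auto
  have "x \<in> f" using insert.prems by simp
  consider (member) k where "f \<in> Fs k"
    | (complement) V k n where "f = topspace X - U V (2*n - 1)" "V \<in> Fs k" "1 \<le> n"
    using insert.prems(1) unfolding subbasic_def by blast
  then show ?case
  proof cases
    case member
    then obtain m where m: "1 \<le> m" "x \<in> U f (2*m)"
      using U_representation_cozero_cover U_representation \<open>x \<in> f\<close> by metis
    have "(m, f) \<in> (\<Union>N. idx N)" using m(1) member mem_UN_idx_iff by blast
    moreover have "core (insert (m, f) a) = core a \<inter> U f (2*m)"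
      unfolding core_def cpart_def by auto
    moreover have "U f (2*m) \<subseteq> f"
      using U_representation_subset[OF U_representation[OF member]] m(1) by simp
    ultimately show ?thesis using IH m(2)
      by (intro exI[of _ "insert (m, f) a"] exI[of _ g]) auto
  next
    case complement
    have "(n, V) \<in> (\<Union>N. idx N)" using complement mem_UN_idx_iff by blast
    moreover have "zpart (n, V) = U V (2*n - 1)" by (simp add: zpart_def)
    moreover have "core a \<subseteq> topspace X" by (simp add: core_def)
    ultimately show ?thesis using IH complement(1) \<open>x \<in> f\<close>
      by (intro exI[of _ a] exI[of _ "insert (n, V) g"]) auto
  qed
qed

lemma piece_neighbourhood:
  assumes "openin X W" "x \<in> W"
  obtains N a where "finite a" "a \<subseteq> idx N" "x \<in> piece W N a"
proof -
  obtain F where F: "finite F" "F \<subseteq> subbasic" "x \<in> \<Inter>F" "topspace X \<inter> \<Inter>F \<subseteq> W"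
    using subbase_of_neighbourhood[OF subbase_of_subbasic assms] by blast
  have "x \<in> topspace X" using assms openin_subset by blast
  then obtain a g where ag: "finite a" "a \<subseteq> (\<Union>N. idx N)" "finite g" "g \<subseteq> (\<Union>N. idx N)"
      "x \<in> core a" "x \<notin> (\<Union>i\<in>g. zpart i)" "core a - (\<Union>i\<in>g. zpart i) \<subseteq> \<Inter>F"
    using subbasic_INT_approx[OF F(1,2) _ F(3)] by blast
  obtain N\<^sub>0 where N\<^sub>0: "a \<union> g \<subseteq> idx N\<^sub>0"
    using finite_subset_idx[OF finite_UnI[OF ag(1,3)] Un_least[OF ag(2,4)]] .
  define N where "N = max N\<^sub>0 (card g)"
  have "idx N\<^sub>0 \<subseteq> idx N" by (rule idx_mono) (simp add: N_def)
  with N\<^sub>0 have idx: "a \<subseteq> idx N" "g \<subseteq> idx N" by auto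
  have "core a - (\<Union>i\<in>g. zpart i) \<subseteq> topspace X"
    by (auto simp: core_def)
  with ag(7) have "core a - (\<Union>i\<in>g. zpart i) \<subseteq> topspace X \<inter> \<Inter>F"
    by (rule Int_greatest[rotated])
  with F(4) have "core a - (\<Union>i\<in>g. zpart i) \<subseteq> W" by (rule order_trans[rotated])
  then have "g \<in> guards W N a"
    using idx(2) ag(3) unfolding guards_def N_def by simp
  then have "x \<in> piece W N a"
    using ag(5,6) unfolding piece_def excluded_def by blast
  with that ag(1) idx(1) show ?thesis by blast
qed

theorem cozero_base:
  "\<exists>B. base_of X B \<and> sigma_point_finite X B \<and> (\<forall>U\<in>B. cozero_set X U)"
proof (intro exI conjI)
  define B where "B = (\<Union>j. layer (fst (prod_decode j)) (snd (prod_decode j)))"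
  have layer_subset_B: "layer m N \<subseteq> B" for m N
    unfolding B_def by (rule SUP_upper2[where i="prod_encode (m, N)"]) simp_all
  show cozero: "\<forall>c\<in>B. cozero_set X c"
  proof
    fix c assume "c \<in> B"
    then obtain W N a where "c = piece W N a" "finite a" "a \<subseteq> idx N"
      unfolding B_def layer_def by auto
    then show "cozero_set X c" by (simp add: cozero_set_piece)
  qed
  show "sigma_point_finite X B"
    unfolding sigma_point_finite_def B_def
    by (intro exI[of _ "\<lambda>j. layer (fst (prod_decode j)) (snd (prod_decode j))"])
      (simp add: point_finite_layer)
  show "base_of X B"
  proof (rule base_ofI)
    show "\<forall>c\<in>B. openin X c" using cozero cozero_set_imp_openin by blast
  next
    fix W x assume "openin X W" "x \<in> W"
    then obtain \<W> where "\<W> \<subseteq> (\<Union>m. Bs m)" "\<Union>\<W> = W"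
      using base unfolding base_of_def by blast
    with \<open>x \<in> W\<close> obtain W' m where W': "W' \<in> Bs m" "x \<in> W'" "W' \<subseteq> W" by blast
    then have "openin X W'" using base unfolding base_of_def by blast
    then obtain N a where a: "finite a" "a \<subseteq> idx N" and x: "x \<in> piece W' N a"
      by (rule piece_neighbourhood[OF _ W'(2)])
    have "piece W' N a \<in> B"
      using W'(1) a layer_subset_B unfolding layer_def by blast
    moreover have "piece W' N a \<subseteq> W" using piece_subset W'(3) by (rule order_trans)
    ultimately show "\<exists>c\<in>B. x \<in> c \<and> c \<subseteq> W" using x by blast
  qed
qed

end

theorem sigma_point_finite_almost_subbase_cozero_base:
  fixes X :: "'a topology"
  assumes "almost_subbase X \<alpha>" "sigma_point_finite X \<alpha>"
    and "\<exists>B. base_of X B \<and> sigma_point_finite X B"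
  shows "\<exists>B. base_of X B \<and> sigma_point_finite X B \<and> (\<forall>U\<in>B. cozero_set X U)"
proof -
  obtain U where "\<forall>V\<in>\<alpha>. U_representation X V (U V)"
      and "subbase_of X (\<alpha> \<union> {topspace X - U V (2*n - 1) | V n. V \<in> \<alpha> \<and> n \<ge> 1})"
    using assms(1) unfolding almost_subbase_def by blast
  moreover obtain Fs :: "nat \<Rightarrow> 'a set set" where "\<alpha> = (\<Union>k. Fs k)" "\<And>k. point_finite X (Fs k)"
    using assms(2) unfolding sigma_point_finite_def by blast
  moreover obtain Bs :: "nat \<Rightarrow> 'a set set" where "base_of X (\<Union>m. Bs m)" "\<And>m. point_finite X (Bs m)"
    using assms(3) unfolding sigma_point_finite_def by blast
  ultimately interpret sigma_point_finite_almost_subbase X U Fs Bs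
    by unfold_locales auto
  show ?thesis by (rule cozero_base)
qed

theorem corollary5p8:
  fixes X :: "'a topology"
  assumes "E_space X"
    and "\<exists>B. base_of X B \<and> sigma_point_finite X B"
  shows "\<exists>B. base_of X B \<and> sigma_point_finite X B \<and> (\<forall>U\<in>B. cozero_set X U)"
proof -
  obtain \<alpha> where "almost_subbase X \<alpha>" "sigma_strongly_point_finite \<alpha>"
    using assms(1) unfolding E_space_def by blast
  then show ?thesis
    using sigma_point_finite_almost_subbase_cozero_base assms(2)
      sigma_strongly_point_finite_imp_sigma_point_finite by blast
qed

end
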